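(* Let $W$ be a symmetric binary-input discrete memoryless channel with finite output alphabet $\mathcal{Y}$, let $A$ be an invertible $N\times N$ matrix over $\mathbb{F}_2$, and let $P$ be an $N\times N$ permutation matrix. Then for every $\mathbf{y}\in\mathcal{Y}^N$, $\mathbf{y}$ and $T_P(\mathbf{y})$ are probability equivalent on $A$, i.e. $W_A(T_P(\mathbf{y}))=W_A(\mathbf{y})$.
   Context: Symmetric channel: $W(y|x)$, $x\in\{0,1\}$, $y\in\mathcal{Y}$, and there is an involution $y\mapsto 1\cdot y$ of $\mathcal{Y}$ with $W(1\cdot y|0)=W(y|1)$ and $W(1\cdot y|1)=W(y|0)$; set $0\cdot y=y$. For $\mathbf{u}\in\mathbb{F}_2^N$, $\mathbf{u}\cdot\mathbf{y}=(u_1\cdot y_1,\dots,u_N\cdot y_N)$. $W^N(\mathbf{y}|\mathbf{x})=\prod_j W(y_j|x_j)$. For a binary matrix $A$ with $N$ columns, $W_A(\mathbf{y})=\frac{1}{2^{N-1}}\sum_{\mathbf{u}\in\mathrm{row}(A)}W^N(\mathbf{u}\cdot\mathbf{y}|\mathbf{0})$, where $\mathrm{row}(A)$ is the row space over $\mathbb{F}_2$; $\mathbf{y},\mathbf{v}$ are probability equivalent on $A$ if $W_A(\mathbf{y})=W_A(\mathbf{v})$. $T_P(\mathbf{y})=\mathbf{y}P$ is the coordinate permutation of $\mathbf{y}$ given by $P$. *)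

theory Defs
  imports "HOL-Analysis.Analysis" "HOL-Library.Z2"
begin

text \<open>A binary-input DMC with finite output alphabet 'y: W x y stands for W(y|x).\<close>
definition bdmc :: "(bit \<Rightarrow> 'y::finite \<Rightarrow> real) \<Rightarrow> bool" where
  "bdmc W \<longleftrightarrow> (\<forall>x y. 0 \<le> W x y) \<and> (\<forall>x. (\<Sum>y\<in>UNIV. W x y) = 1)"

text \<open>Symmetry of the channel with respect to the involution flip (the map y \<mapsto> 1\<cdot>y).\<close>
definition symmetric_channel :: "(bit \<Rightarrow> 'y \<Rightarrow> real) \<Rightarrow> ('y \<Rightarrow> 'y) \<Rightarrow> bool" where
  "symmetric_channel W flip \<longleftrightarrow>
     (\<forall>y. flip (flip y) = y) \<and>
     (\<forall>y. W 0 (flip y) = W 1 y) \<and> (\<forall>y. W 1 (flip y) = W 0 y)"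

definition act :: "('y \<Rightarrow> 'y) \<Rightarrow> bit \<Rightarrow> 'y \<Rightarrow> 'y" where
  "act flip u y = (if u = 1 then flip y else y)"

definition vact :: "('y \<Rightarrow> 'y) \<Rightarrow> bit ^ 'n \<Rightarrow> 'y ^ 'n \<Rightarrow> 'y ^ 'n" where
  "vact flip u y = (\<chi> j. act flip (u $ j) (y $ j))"

definition WN :: "(bit \<Rightarrow> 'y \<Rightarrow> real) \<Rightarrow> 'y ^ 'n::finite \<Rightarrow> bit ^ 'n \<Rightarrow> real" where
  "WN W y x = (\<Prod>j\<in>UNIV. W (x $ j) (y $ j))"

definition row_space :: "bit ^ 'n ^ 'm::finite \<Rightarrow> (bit ^ 'n) set" where
  "row_space A = range (\<lambda>c. c v* A)"

definition W_A :: "(bit \<Rightarrow> 'y \<Rightarrow> real) \<Rightarrow> ('y \<Rightarrow> 'y) \<Rightarrow> bit ^ 'n::finite ^ 'm::finite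
                    \<Rightarrow> 'y ^ 'n \<Rightarrow> real" where
  "W_A W flip A y = (1 / 2 ^ (CARD('n) - 1)) * (\<Sum>u\<in>row_space A. WN W (vact flip u y) 0)"

definition prob_equiv :: "(bit \<Rightarrow> 'y \<Rightarrow> real) \<Rightarrow> ('y \<Rightarrow> 'y) \<Rightarrow> bit ^ 'n::finite ^ 'm::finite
                    \<Rightarrow> 'y ^ 'n \<Rightarrow> 'y ^ 'n \<Rightarrow> bool" where
  "prob_equiv W flip A y v \<longleftrightarrow> W_A W flip A y = W_A W flip A v"

definition permutation_matrix :: "bit ^ 'n ^ 'n \<Rightarrow> bool" where
  "permutation_matrix P \<longleftrightarrow>
     (\<exists>\<sigma>. \<sigma> permutes (UNIV :: 'n set) \<and> (\<forall>i j. P $ i $ j = (if \<sigma> i = j then 1 else 0)))"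

text \<open>T_P(y) = yP: the j-th entry of yP is y_i for the unique i with P i j = 1.\<close>
definition T_P :: "bit ^ 'n ^ 'n \<Rightarrow> 'y ^ 'n \<Rightarrow> 'y ^ 'n" where
  "T_P P y = (\<chi> j. y $ (THE i. P $ i $ j = 1))"

end

theory Submission
  imports Defs
begin

text \<open>An invertible A has the whole space as its row space, so W_A(y) sums W^N(u \<cdot> y | 0)
  over all u. Permuting the coordinates of y by \<tau> and reindexing the sum by the same
  permutation of u leaves every product W^N(u \<cdot> y | 0) unchanged up to the order of its
  factors.\<close>

definition vec_permute :: "('n \<Rightarrow> 'n) \<Rightarrow> 'a ^ 'n \<Rightarrow> 'a ^ 'n" where
  "vec_permute \<tau> v = (\<chi> j. v $ \<tau> j)"

lemma vec_permute_inv: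
  assumes "\<tau> permutes (UNIV :: 'n::finite set)"
  shows "vec_permute (inv \<tau>) (vec_permute \<tau> v) = v"
    and "vec_permute \<tau> (vec_permute (inv \<tau>) v) = v"
  using assms by (simp_all add: vec_permute_def vec_eq_iff permutes_inverses)

lemma bij_vec_permute:
  assumes "\<tau> permutes (UNIV :: 'n::finite set)"
  shows "bij (vec_permute \<tau> :: 'a ^ 'n \<Rightarrow> 'a ^ 'n)"
  by (rule bij_betw_byWitness[where f' = "vec_permute (inv \<tau>)"])
    (use vec_permute_inv[OF assms] in auto)

lemma vact_vec_permute:
  "vact flip (vec_permute \<tau> u) (vec_permute \<tau> y) = vec_permute \<tau> (vact flip u y)"
  by (simp add: vact_def vec_permute_def)

lemma WN_vec_permute:
  assumes "\<tau> permutes (UNIV :: 'n::finite set)"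
  shows "WN W (vec_permute \<tau> y) (vec_permute \<tau> x) = WN W y x"
proof -
  have "WN W (vec_permute \<tau> y) (vec_permute \<tau> x) = (\<Prod>j\<in>UNIV. W (x $ \<tau> j) (y $ \<tau> j))"
    by (simp add: WN_def vec_permute_def)
  also have "\<dots> = WN W y x"
    unfolding WN_def
    by (rule prod.reindex_bij_betw[OF permutes_imp_bij[OF assms],
          where g = "\<lambda>i. W (x $ i) (y $ i)"])
  finally show ?thesis .
qed

lemma sum_WN_vact_vec_permute:
  fixes y :: "'y ^ 'n::finite"
  assumes "\<tau> permutes (UNIV :: 'n set)"
  shows "(\<Sum>u\<in>UNIV. WN W (vact flip u (vec_permute \<tau> y)) 0) = (\<Sum>u\<in>UNIV. WN W (vact flip u y) 0)"
proof -
  have zero: "vec_permute \<tau> (0 :: bit ^ 'n) = 0"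
    by (simp add: vec_permute_def vec_eq_iff)
  have "(\<Sum>u\<in>UNIV. WN W (vact flip u (vec_permute \<tau> y)) 0)
      = (\<Sum>u\<in>UNIV. WN W (vact flip (vec_permute \<tau> u) (vec_permute \<tau> y)) 0)"
    by (rule sum.reindex_bij_betw[OF bij_vec_permute[OF assms], symmetric])
  also have "\<dots> = (\<Sum>u\<in>UNIV. WN W (vact flip u y) 0)"
    by (simp only: vact_vec_permute WN_vec_permute[OF assms, of W _ 0, unfolded zero])
  finally show ?thesis .
qed

lemma row_space_left_invertible:
  fixes A :: "bit ^ 'n ^ 'm::finite"
  assumes "B ** A = mat 1"
  shows "row_space A = UNIV"
proof -
  have "(u v* B) v* A = u" for u
    by (simp add: vector_matrix_mul_assoc assms)
  then show ?thesis
    unfolding row_space_def by (metis UNIV_eq_I rangeI)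
qed

lemma T_P_permutation_matrix:
  assumes \<sigma>: "\<sigma> permutes (UNIV :: 'n::finite set)"
    and P: "\<forall>i j. P $ i $ j = (if \<sigma> i = j then (1::bit) else 0)"
  shows "T_P P y = vec_permute (inv \<sigma>) y"
proof -
  have "(THE i. P $ i $ j = 1) = inv \<sigma> j" for j
  proof (rule the_equality)
    show "P $ inv \<sigma> j $ j = 1"
      using P \<sigma> by (simp add: permutes_inverses(1))
  next
    fix i assume "P $ i $ j = 1"
    then have "\<sigma> i = j" using P by (metis zero_neq_one)
    then show "i = inv \<sigma> j" using \<sigma> by (metis permutes_inverses(2))
  qed
  then show ?thesis
    by (simp add: T_P_def vec_permute_def)
qed

theorem corollary1:
  fixes W :: "bit \<Rightarrow> 'y::finite \<Rightarrow> real" and flip :: "'y \<Rightarrow> 'y"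
    and A :: "bit ^ 'n::finite ^ 'n" and P :: "bit ^ 'n ^ 'n"
  assumes "bdmc W" and "symmetric_channel W flip"
    and "invertible A" and "permutation_matrix P"
  shows "\<forall>y :: 'y ^ 'n. prob_equiv W flip A y (T_P P y)"
proof
  fix y :: "'y ^ 'n"
  obtain \<sigma> where \<sigma>: "\<sigma> permutes (UNIV :: 'n set)"
    and P: "\<forall>i j. P $ i $ j = (if \<sigma> i = j then (1::bit) else 0)"
    using \<open>permutation_matrix P\<close> unfolding permutation_matrix_def by blast
  obtain B where "B ** A = mat 1"
    using \<open>invertible A\<close> unfolding invertible_def by blast
  then have "row_space A = UNIV"
    by (rule row_space_left_invertible)
  then show "prob_equiv W flip A y (T_P P y)"
    unfolding prob_equiv_def W_A_def T_P_permutation_matrix[OF \<sigma> P]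
    by (simp add: sum_WN_vact_vec_permute[OF permutes_inv[OF \<sigma>]])
qed

end
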